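(* Let $x,y\in\mathrm{Cay}$. Then $[x]\ge[y]$ if and only if $\gamma(x)\ge\gamma(y)$ (containment of permutations). Equivalently, the bijection $[x]\mapsto\gamma(x)$ from the set $[\mathrm{Cay}]$ of equivalence classes to $\mathcal{S}$ maps the set of classes avoiding $[y]$ (i.e. classes $[x]$ with $[x]\not\ge[y]$) onto $\mathcal{S}(\gamma(y))$, the set of permutations avoiding $\gamma(y)$.
   Context: A Cayley permutation of length $n$ is a word of positive integers in which every integer from $1$ to its maximum occurs; $\mathrm{Cay}$ is the set of all of them, $\mathcal{S}\subseteq\mathrm{Cay}$ the set of permutations. For Cayley permutations, $y\le x$ (containment) means there are indices $i_1<\dots<i_k$ ($k$ the length of $y$) with $x(i_s)<x(i_t)\iff y(s)<y(t)$ and $x(i_s)=x(i_t)\iff y(s)=y(t)$. For $x\in\mathrm{Cay}_n$, $\gamma(x)\in\mathcal{S}_n$ is obtained by sorting the pairs $(x(i),i)$ increasingly by first coordinate, ties by decreasing second coordinate, and reading off the second coordinates. Write $x\sim y$ iff $\gamma(x)=\gamma(y)$; $[y]$ is the class of $y$ and $[\mathrm{Cay}]$ the set of classes. For classes, $[x]\ge[y]$ means $x'\ge y'$ for some $x'\in[x]$, $y'\in[y]$. $\mathcal{S}(\tau)$ is the set of permutations avoiding $\tau$. *)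

theory Defs
  imports Main "HOL-Library.Product_Lexorder"
begin

text \<open>Words are lists of naturals; positions are 0-based list indices, values are 1-based.\<close>

definition is_cay :: "nat list \<Rightarrow> bool" where
  "is_cay x \<longleftrightarrow> (\<exists>m. set x = {1..m})"

definition is_perm :: "nat list \<Rightarrow> bool" where
  "is_perm x \<longleftrightarrow> is_cay x \<and> distinct x"

definition contains :: "nat list \<Rightarrow> nat list \<Rightarrow> bool" where
  "contains x y \<longleftrightarrow> (\<exists>is. length is = length y \<and> sorted_wrt (<) is \<and>
      (\<forall>j\<in>set is. j < length x) \<and>
      (\<forall>s<length y. \<forall>t<length y.
         (x ! (is ! s) < x ! (is ! t) \<longleftrightarrow> y ! s < y ! t) \<and>
         (x ! (is ! s) = x ! (is ! t) \<longleftrightarrow> y ! s = y ! t)))"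

text \<open>gamma: sort pairs (x(i), i) increasingly by value, ties by decreasing position,
  and read off positions (converted to 1-based).\<close>
definition gamma :: "nat list \<Rightarrow> nat list" where
  "gamma x = map (\<lambda>(v, i). i + 1)
     (sort_key (\<lambda>(v, i). (v, length x - i)) (zip x [0..<length x]))"

definition cay_equiv :: "nat list \<Rightarrow> nat list \<Rightarrow> bool" where
  "cay_equiv x y \<longleftrightarrow> gamma x = gamma y"

definition class_ge :: "nat list \<Rightarrow> nat list \<Rightarrow> bool" where
  "class_ge x y \<longleftrightarrow> (\<exists>x' y'. is_cay x' \<and> is_cay y' \<and> cay_equiv x' x \<and> cay_equiv y' y
      \<and> contains x' y')"

end

theory Submission
  imports Defs
begin

text \<open>Order the positions i of a word w by the key (w i, |w| - i). Then gamma w lists the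
  positions in key order, so the position order and the value order of the permutation gamma w
  are the key order and the position order of w, exchanged. An occurrence of y in x is an index
  map preserving both the position order and the key order (ties in value are broken by position,
  which an occurrence preserves), and for words without repeated letters preserving both orders
  is the same as being an occurrence. Hence containment passes from x, y to gamma x, gamma y.
  Conversely gamma is an involution on permutations, so gamma (gamma x) is a Cayley word in the
  class of x, and containment of the gammas lifts back to the classes.\<close>

lemma map_insort_key: "map g (insort_key (\<lambda>x. f (g x)) x xs) = insort_key f (g x) (map g xs)"
  by (induction xs) auto

lemma map_sort_key: "map g (sort_key (\<lambda>x. f (g x)) xs) = sort_key f (map g xs)"
  by (induction xs) (simp_all add: map_insort_key)

lemma strict_sorted_nth_less_iff:
  fixes xs :: "'a::linorder list"
  assumes "sorted_wrt (<) xs" "i < length xs" "j < length xs"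
  shows "xs ! i < xs ! j \<longleftrightarrow> i < j"
  using assms by (metis linorder_neqE_nat not_less_iff_gr_or_eq sorted_wrt_nth_less)

definition key :: "nat list \<Rightarrow> nat \<Rightarrow> nat \<times> nat" where
  "key w i = (w ! i, length w - i)"

definition key_order :: "nat list \<Rightarrow> nat list" where
  "key_order w = sort_key (key w) [0..<length w]"

lemma gamma_eq_map_Suc_key_order: "gamma w = map Suc (key_order w)"
proof -
  have "zip w [0..<length w] = map (\<lambda>i. (w ! i, i)) [0..<length w]"
    by (rule nth_equalityI) auto
  moreover have "key w = (\<lambda>i. (\<lambda>(v, i). (v, length w - i)) (w ! i, i))"
    by (auto simp: key_def)
  ultimately show ?thesis
    unfolding gamma_def key_order_def by (simp add: map_sort_key[symmetric])
qed

lemma length_key_order [simp]: "length (key_order w) = length w"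
  by (simp add: key_order_def)

lemma set_key_order [simp]: "set (key_order w) = {..<length w}"
  by (auto simp: key_order_def)

lemma distinct_key_order: "distinct (key_order w)"
  by (simp add: key_order_def)

lemma key_order_nth_less: "r < length w \<Longrightarrow> key_order w ! r < length w"
  using nth_mem[of r "key_order w"] by simp

lemma strict_sorted_key_key_order: "sorted_wrt (<) (map (key w) (key_order w))"
proof -
  have "inj_on (key w) (set (key_order w))"
    by (auto simp: inj_on_def key_def)
  then show ?thesis
    unfolding strict_sorted_iff
    by (simp add: distinct_map distinct_key_order) (simp add: key_order_def)
qed

lemma key_key_order_less_iff:
  assumes "r < length w" "r' < length w"
  shows "key w (key_order w ! r) < key w (key_order w ! r') \<longleftrightarrow> r < r'"
  using strict_sorted_nth_less_iff[OF strict_sorted_key_key_order] assms by simp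

lemma key_less_iff_nth_less:
  assumes "distinct w" "i < length w" "j < length w"
  shows "key w i < key w j \<longleftrightarrow> w ! i < w ! j"
  using assms nth_eq_iff_index_eq[OF assms] by (auto simp: key_def)

lemma length_gamma [simp]: "length (gamma w) = length w"
  by (simp add: gamma_eq_map_Suc_key_order)

lemma gamma_nth: "r < length w \<Longrightarrow> gamma w ! r = Suc (key_order w ! r)"
  by (simp add: gamma_eq_map_Suc_key_order)

lemma distinct_gamma: "distinct (gamma w)"
  by (simp add: gamma_eq_map_Suc_key_order distinct_map distinct_key_order)

lemma set_gamma: "set (gamma w) = {1..length w}"
  by (simp add: gamma_eq_map_Suc_key_order lessThan_atLeast0
      atLeastLessThanSuc_atLeastAtMost[symmetric])

lemma is_perm_gamma: "is_perm (gamma w)"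
  unfolding is_perm_def is_cay_def using set_gamma distinct_gamma by blast

lemma is_cay_gamma: "is_cay (gamma w)"
  using is_perm_gamma by (simp add: is_perm_def)

lemma key_gamma_less_iff:
  assumes "r < length w" "r' < length w"
  shows "key (gamma w) r < key (gamma w) r' \<longleftrightarrow> key_order w ! r < key_order w ! r'"
  using key_less_iff_nth_less[OF distinct_gamma] assms by (simp add: gamma_nth)

definition key_embedding :: "nat list \<Rightarrow> nat list \<Rightarrow> (nat \<Rightarrow> nat) \<Rightarrow> bool" where
  "key_embedding x y f \<longleftrightarrow> (\<forall>s<length y. f s < length x \<and> (\<forall>t<length y.
     (s < t \<longleftrightarrow> f s < f t) \<and> (key y s < key y t \<longleftrightarrow> key x (f s) < key x (f t))))"

lemma key_embeddingI:
  assumes "\<And>s. s < length y \<Longrightarrow> f s < length x"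
    and "\<And>s t. s < length y \<Longrightarrow> t < length y \<Longrightarrow> s < t \<longleftrightarrow> f s < f t"
    and "\<And>s t. s < length y \<Longrightarrow> t < length y \<Longrightarrow> key y s < key y t \<longleftrightarrow> key x (f s) < key x (f t)"
  shows "key_embedding x y f"
  using assms by (simp add: key_embedding_def)

lemma key_embeddingD:
  assumes "key_embedding x y f" "s < length y" "t < length y"
  shows "f s < length x" "s < t \<longleftrightarrow> f s < f t"
    and "key y s < key y t \<longleftrightarrow> key x (f s) < key x (f t)"
  using assms by (simp_all add: key_embedding_def)

lemma contains_imp_key_embedding:
  assumes "contains x y"
  obtains f where "key_embedding x y f"
proof -
  obtain "is" where len: "length is = length y" and sorted: "sorted_wrt (<) is"
    and bound: "\<forall>j\<in>set is. j < length x"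
    and pattern: "\<forall>s<length y. \<forall>t<length y.
         (x ! (is ! s) < x ! (is ! t) \<longleftrightarrow> y ! s < y ! t) \<and>
         (x ! (is ! s) = x ! (is ! t) \<longleftrightarrow> y ! s = y ! t)"
    using assms unfolding contains_def by blast
  have is_less: "is ! s < length x" if "s < length y" for s
    using bound len that by simp
  have is_less_iff: "is ! s < is ! t \<longleftrightarrow> s < t" if "s < length y" "t < length y" for s t
    using strict_sorted_nth_less_iff[OF sorted] len that by simp
  have "key_embedding x y ((!) is)"
  proof (rule key_embeddingI)
    fix s t assume s: "s < length y" and t: "t < length y"
    show "is ! s < length x" using is_less s .
    show "s < t \<longleftrightarrow> is ! s < is ! t" using is_less_iff s t by simp
    have "length y - s < length y - t \<longleftrightarrow> length x - is ! s < length x - is ! t"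
      using is_less_iff[OF t s] is_less[OF s] is_less[OF t] s t by auto
    moreover have "x ! (is ! s) < x ! (is ! t) \<longleftrightarrow> y ! s < y ! t"
      and "x ! (is ! s) = x ! (is ! t) \<longleftrightarrow> y ! s = y ! t"
      using pattern s t by blast+
    ultimately show "key y s < key y t \<longleftrightarrow> key x (is ! s) < key x (is ! t)"
      by (auto simp: key_def less_prod_def)
  qed
  then show thesis by (rule that)
qed

lemma key_embedding_imp_contains:
  assumes "distinct x" "distinct y" "key_embedding x y f"
  shows "contains x y"
  unfolding contains_def
proof (intro exI conjI ballI allI impI)
  note f = key_embeddingD[OF assms(3)]
  show "length (map f [0..<length y]) = length y" by simp
  have "f s < f t" if "s < t" "t < length y" for s t
    using f(2)[of s t] that by simp
  then show "sorted_wrt (<) (map f [0..<length y])"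
    by (simp add: sorted_wrt_iff_nth_less)
  show "j < length x" if "j \<in> set (map f [0..<length y])" for j
    using f(1) that by auto
  fix s t assume s: "s < length y" and t: "t < length y"
  have "x ! f s < x ! f t \<longleftrightarrow> y ! s < y ! t"
    using f(1,3)[OF s t] f(1)[OF t s] s t
      key_less_iff_nth_less[OF assms(1)] key_less_iff_nth_less[OF assms(2)]
    by simp
  then show "x ! (map f [0..<length y] ! s) < x ! (map f [0..<length y] ! t) \<longleftrightarrow> y ! s < y ! t"
    using s t by simp
  have "f s = f t \<longleftrightarrow> s = t"
    using f(2)[OF s t] f(2)[OF t s] by (metis less_irrefl linorder_neqE_nat)
  then show "x ! (map f [0..<length y] ! s) = x ! (map f [0..<length y] ! t) \<longleftrightarrow> y ! s = y ! t"
    using f(1)[OF s t] f(1)[OF t s] s t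
      nth_eq_iff_index_eq[OF assms(1)] nth_eq_iff_index_eq[OF assms(2)]
    by simp
qed

lemma key_order_surj:
  assumes "i < length w"
  obtains r where "r < length w" "key_order w ! r = i"
  using assms nth_mem in_set_conv_nth[of i "key_order w"] by auto

lemma key_embedding_gamma:
  assumes "key_embedding x y f"
  obtains g where "key_embedding (gamma x) (gamma y) g"
proof -
  note f = key_embeddingD[OF assms]
  have "\<exists>r. r < length x \<and> key_order x ! r = f (key_order y ! s)" if "s < length y" for s
    using key_order_surj f(1)[OF key_order_nth_less[OF that] key_order_nth_less[OF that]] by metis
  then obtain g where g_less: "\<And>s. s < length y \<Longrightarrow> g s < length x"
    and g: "\<And>s. s < length y \<Longrightarrow> key_order x ! g s = f (key_order y ! s)"
    by metis
  have "key_embedding (gamma x) (gamma y) g"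
  proof (rule key_embeddingI, unfold length_gamma)
    fix s t assume s: "s < length y" and t: "t < length y"
    note ys = key_order_nth_less[OF s] and yt = key_order_nth_less[OF t]
    show "g s < length x" using g_less s .
    have "s < t \<longleftrightarrow> key y (key_order y ! s) < key y (key_order y ! t)"
      using key_key_order_less_iff s t by simp
    also have "\<dots> \<longleftrightarrow> key x (key_order x ! g s) < key x (key_order x ! g t)"
      using f(3)[OF ys yt] g[OF s] g[OF t] by simp
    also have "\<dots> \<longleftrightarrow> g s < g t"
      using key_key_order_less_iff g_less s t by simp
    finally show "s < t \<longleftrightarrow> g s < g t" .
    have "key (gamma y) s < key (gamma y) t \<longleftrightarrow> key_order y ! s < key_order y ! t"
      using key_gamma_less_iff s t by simp
    also have "\<dots> \<longleftrightarrow> key_order x ! g s < key_order x ! g t"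
      using f(2)[OF ys yt] g[OF s] g[OF t] by simp
    also have "\<dots> \<longleftrightarrow> key (gamma x) (g s) < key (gamma x) (g t)"
      using key_gamma_less_iff g_less s t by simp
    finally show "key (gamma y) s < key (gamma y) t \<longleftrightarrow> key (gamma x) (g s) < key (gamma x) (g t)" .
  qed
  then show thesis by (rule that)
qed

lemma contains_gamma:
  assumes "contains x y"
  shows "contains (gamma x) (gamma y)"
proof -
  obtain f where "key_embedding x y f"
    using assms by (rule contains_imp_key_embedding)
  then obtain g where "key_embedding (gamma x) (gamma y) g"
    by (rule key_embedding_gamma)
  then show ?thesis
    by (rule key_embedding_imp_contains[OF distinct_gamma distinct_gamma])
qed

lemma set_perm:
  assumes "is_perm p"
  shows "set p = {1..length p}"
proof -
  obtain m where m: "set p = {1..m}" and "distinct p"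
    using assms unfolding is_perm_def is_cay_def by blast
  then have "m = length p"
    using distinct_card[of p] by simp
  then show ?thesis using m by simp
qed

lemma perm_nth_key_order:
  assumes "is_perm p" "r < length p"
  shows "p ! (key_order p ! r) = Suc r"
proof -
  have distinct: "distinct p" using assms(1) by (simp add: is_perm_def)
  have "p ! (key_order p ! i) < p ! (key_order p ! j)" if "i < j" "j < length p" for i j
    using key_key_order_less_iff[of i p j] key_less_iff_nth_less[OF distinct]
      key_order_nth_less[of i p] key_order_nth_less[of j p] that
    by simp
  then have "sorted_wrt (<) (map ((!) p) (key_order p))"
    by (simp add: sorted_wrt_iff_nth_less)
  moreover have "set (map ((!) p) (key_order p)) = set [1..<Suc (length p)]"
    using set_perm[OF assms(1)] nth_image[of "length p" p]
    by (simp only: set_map set_key_order set_upt lessThan_atLeast0 take_all order.refl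
        atLeastLessThanSuc_atLeastAtMost)
  ultimately have "map ((!) p) (key_order p) = [1..<Suc (length p)]"
    by (rule strict_sorted_equal[OF sorted_wrt_upt])
  then have "map ((!) p) (key_order p) ! r = [1..<Suc (length p)] ! r"
    by (rule arg_cong)
  then show ?thesis
    using assms(2) by (simp del: upt_Suc)
qed

lemma gamma_gamma: "is_perm p \<Longrightarrow> gamma (gamma p) = p"
proof (rule nth_equalityI)
  fix r assume p: "is_perm p" and "r < length (gamma (gamma p))"
  then have r: "r < length p" by simp
  let ?s = "key_order (gamma p) ! r"
  have s: "?s < length p" using key_order_nth_less[of r "gamma p"] r by simp
  have "Suc (key_order p ! ?s) = Suc r"
    using perm_nth_key_order[OF is_perm_gamma, of r p] gamma_nth[OF s] r by simp
  then show "gamma (gamma p) ! r = p ! r"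
    using perm_nth_key_order[OF p s] gamma_nth r by simp
qed simp

lemma class_ge_iff_contains_gamma: "class_ge x y \<longleftrightarrow> contains (gamma x) (gamma y)"
proof
  assume "class_ge x y"
  then obtain x' y' where "gamma x' = gamma x" "gamma y' = gamma y" "contains x' y'"
    unfolding class_ge_def cay_equiv_def by blast
  then show "contains (gamma x) (gamma y)"
    using contains_gamma by metis
next
  assume "contains (gamma x) (gamma y)"
  then have "contains (gamma (gamma x)) (gamma (gamma y))"
    by (rule contains_gamma)
  moreover have "cay_equiv (gamma (gamma w)) w" for w
    by (simp add: cay_equiv_def gamma_gamma is_perm_gamma)
  ultimately show "class_ge x y"
    unfolding class_ge_def using is_cay_gamma by blast
qed

theorem theorem4p9:
  assumes "is_cay x" and "is_cay y"
  shows "(class_ge x y \<longleftrightarrow> contains (gamma x) (gamma y)) \<and>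
         gamma ` {x'. is_cay x' \<and> \<not> class_ge x' y} = {p. is_perm p \<and> \<not> contains p (gamma y)}"
proof (intro conjI equalityI subsetI)
  show "class_ge x y \<longleftrightarrow> contains (gamma x) (gamma y)"
    by (rule class_ge_iff_contains_gamma)
next
  fix p assume "p \<in> gamma ` {x'. is_cay x' \<and> \<not> class_ge x' y}"
  then show "p \<in> {p. is_perm p \<and> \<not> contains p (gamma y)}"
    using class_ge_iff_contains_gamma is_perm_gamma by auto
next
  fix p assume p: "p \<in> {p. is_perm p \<and> \<not> contains p (gamma y)}"
  then have "gamma (gamma p) = p"
    by (simp add: gamma_gamma)
  moreover have "\<not> class_ge (gamma p) y"
    using p class_ge_iff_contains_gamma \<open>gamma (gamma p) = p\<close> by simp
  ultimately show "p \<in> gamma ` {x'. is_cay x' \<and> \<not> class_ge x' y}"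
    using is_cay_gamma by (metis (mono_tags) image_eqI mem_Collect_eq)
qed

end
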